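(* For $f\in C_c^\infty(\mathbb R)$ define $\Psi_Nf:\frac1N\mathbb Z\to\mathbb R$ by $(\Psi_Nf)(i)=f(i)$ if $i\in\frac1N\mathbb Z\setminus A_N$ and $(\Psi_Nf)(i)=f(0)$ otherwise, where $A_N=\frac1N\{-R,\dots,R\}\setminus\{0\}$ for a fixed integer $R\ge1$. Then for every $f\in C_c^\infty(\mathbb R)$ the sequence $\Psi_Nf\in H_N^{\mathrm{sip}}$ converges strongly to $f\in H^{\mathrm{sbm}}$ with respect to the Hilbert space convergence $H_N^{\mathrm{sip}}\to H^{\mathrm{sbm}}$.
   Context: $\gamma>0$; $\mu_N$ gives mass $\frac1N$ to each point of $\frac1N\mathbb Z$; $\nu_{\gamma,N}=\mu_N+\sqrt2\gamma\delta_0$; $H_N^{\mathrm{sip}}=L^2(\frac1N\mathbb Z,\nu_{\gamma,N})$; $H^{\mathrm{sbm}}=L^2(\mathbb R,dx+\sqrt2\gamma\delta_0)$. Hilbert convergence is witnessed by $C=\{f+\lambda\mathbf 1_{\{0\}}:f\in C_c^\infty(\mathbb R),\lambda\in\mathbb R\}$ and $\Phi_Nf=f|_{\frac1N\mathbb Z}$. $f_N\in H_N^{\mathrm{sip}}$ converges strongly to $f\in H^{\mathrm{sbm}}$ if there exist $\tilde f_M\in C$ with $\|\tilde f_M-f\|_{H^{\mathrm{sbm}}}\to0$ and $\lim_{M\to\infty}\limsup_{N\to\infty}\|\Phi_N\tilde f_M-f_N\|_{H_N^{\mathrm{sip}}}=0$. *)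

theory Defs
  imports "HOL-Analysis.Analysis" "HOL-Library.Extended_Real"
begin

definition Cc_inf :: "(real \<Rightarrow> real) set" where
  "Cc_inf = {f. (\<forall>n x. (deriv ^^ n) f differentiable (at x))
               \<and> compact (closure {x. f x \<noteq> 0})}"

definition core_C :: "(real \<Rightarrow> real) set" where
  "core_C = {g. \<exists>f c. f \<in> Cc_inf \<and> g = (\<lambda>x. f x + c * indicator {0} x)}"

text \<open>Norm of H^sbm = L^2(R, dx + sqrt 2 gamma delta_0).\<close>
definition sbm_norm :: "real \<Rightarrow> (real \<Rightarrow> real) \<Rightarrow> real" where
  "sbm_norm \<gamma> g = sqrt ((LINT x|lborel. (g x)\<^sup>2) + sqrt 2 * \<gamma> * (g 0)\<^sup>2)"

text \<open>Elements of H_N^sip are represented as functions int => real, where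
  u i is the value at the lattice point i/N. Norm of L^2(Z/N, mu_N + sqrt 2 gamma delta_0).\<close>
definition sip_norm :: "real \<Rightarrow> nat \<Rightarrow> (int \<Rightarrow> real) \<Rightarrow> real" where
  "sip_norm \<gamma> N u = sqrt ((\<Sum>\<^sub>\<infinity>i::int. (u i)\<^sup>2 / real N) + sqrt 2 * \<gamma> * (u 0)\<^sup>2)"

definition Phi :: "nat \<Rightarrow> (real \<Rightarrow> real) \<Rightarrow> (int \<Rightarrow> real)" where
  "Phi N f = (\<lambda>i. f (real_of_int i / real N))"

definition Psi :: "int \<Rightarrow> nat \<Rightarrow> (real \<Rightarrow> real) \<Rightarrow> (int \<Rightarrow> real)" where
  "Psi R N f = (\<lambda>i. if i \<in> {-R..R} - {0} then f 0 else f (real_of_int i / real N))"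

definition strongly_converges :: "real \<Rightarrow> (nat \<Rightarrow> int \<Rightarrow> real) \<Rightarrow> (real \<Rightarrow> real) \<Rightarrow> bool" where
  "strongly_converges \<gamma> fN f \<longleftrightarrow>
     (\<exists>ft :: nat \<Rightarrow> real \<Rightarrow> real.
        (\<forall>M. ft M \<in> core_C) \<and>
        (\<lambda>M. sbm_norm \<gamma> (\<lambda>x. ft M x - f x)) \<longlonglongrightarrow> 0 \<and>
        (\<lambda>M. limsup (\<lambda>N. ereal (sip_norm \<gamma> N (\<lambda>i. Phi N (ft M) i - fN N i)))) \<longlonglongrightarrow> 0)"

end

theory Submission
  imports Defs
begin

text \<open>Take the constant approximating sequence f itself. Then Phi_N f - Psi_N f vanishes
  outside the fixed finite set {-R..R} - {0}, on which it tends to 0 by continuity of f at 0,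
  while each lattice point carries mass 1/N; so its norm in H_N^sip tends to 0.\<close>

lemma Cc_inf_isCont:
  assumes "f \<in> Cc_inf"
  shows "isCont f x"
proof -
  have "((deriv ^^ 0) f) differentiable (at x)"
    using assms unfolding Cc_inf_def by blast
  then show ?thesis
    by (simp add: differentiable_imp_continuous_within)
qed

lemma Cc_inf_subset_core_C: "Cc_inf \<subseteq> core_C"
  unfolding core_C_def by force

lemma sbm_norm_zero [simp]: "sbm_norm \<gamma> (\<lambda>x. 0) = 0"
  by (simp add: sbm_norm_def)

lemma sip_norm_finite_support:
  assumes "finite S" and "\<And>i. i \<notin> S \<Longrightarrow> u i = 0" and "u 0 = 0"
  shows "sip_norm \<gamma> N u = sqrt (\<Sum>i\<in>S. (u i)\<^sup>2 / real N)"
proof -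
  have "(\<Sum>\<^sub>\<infinity>i::int. (u i)\<^sup>2 / real N) = (\<Sum>\<^sub>\<infinity>i\<in>S. (u i)\<^sup>2 / real N)"
    by (rule infsum_cong_neutral) (auto simp: assms(2))
  also have "\<dots> = (\<Sum>i\<in>S. (u i)\<^sup>2 / real N)"
    using assms(1) by (rule infsum_finite)
  finally show ?thesis
    by (simp add: sip_norm_def assms(3))
qed

lemma sip_norm_tendsto_zero_finite_support:
  assumes "finite S" and "\<And>N i. i \<notin> S \<Longrightarrow> u N i = 0" and "\<And>N. u N 0 = 0"
    and "\<And>i. (\<lambda>N. u N i) \<longlonglongrightarrow> l i"
  shows "(\<lambda>N. sip_norm \<gamma> N (u N)) \<longlonglongrightarrow> 0"
proof -
  have "(\<lambda>N. (u N i)\<^sup>2 * (1 / real N)) \<longlonglongrightarrow> (l i)\<^sup>2 * 0" for i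
    by (intro tendsto_mult tendsto_power assms(4) lim_const_over_n)
  then have "(\<lambda>N. \<Sum>i\<in>S. (u N i)\<^sup>2 / real N) \<longlonglongrightarrow> (\<Sum>i\<in>S. 0)"
    by (intro tendsto_sum) simp
  then have "(\<lambda>N. sqrt (\<Sum>i\<in>S. (u N i)\<^sup>2 / real N)) \<longlonglongrightarrow> sqrt 0"
    by (intro tendsto_real_sqrt) simp
  then show ?thesis
    using sip_norm_finite_support[of S "u N" for N] assms(1-3) by simp
qed

lemma strongly_converges_if_sip_norm_tendsto_zero:
  assumes "f \<in> core_C"
    and "(\<lambda>N. sip_norm \<gamma> N (\<lambda>i. Phi N f i - fN N i)) \<longlonglongrightarrow> 0"
  shows "strongly_converges \<gamma> fN f"
proof -
  have "(\<lambda>N. ereal (sip_norm \<gamma> N (\<lambda>i. Phi N f i - fN N i))) \<longlonglongrightarrow> ereal 0"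
    using assms(2) by (rule tendsto_ereal)
  then have "limsup (\<lambda>N. ereal (sip_norm \<gamma> N (\<lambda>i. Phi N f i - fN N i))) = 0"
    by (simp add: lim_imp_Limsup zero_ereal_def)
  then show ?thesis
    unfolding strongly_converges_def using assms(1)
    by (intro exI[of _ "\<lambda>M. f"]) simp
qed

lemma Phi_minus_Psi:
  "Phi N f i - Psi R N f i
     = (if i \<in> {-R..R} - {0} then f (real_of_int i / real N) - f 0 else 0)"
  unfolding Phi_def Psi_def by auto

lemma Phi_minus_Psi_tendsto_zero:
  assumes "isCont f 0"
  shows "(\<lambda>N. Phi N f i - Psi R N f i) \<longlonglongrightarrow> 0"
proof -
  have "(\<lambda>N. real_of_int i / real N) \<longlonglongrightarrow> 0"
    by (intro tendsto_divide_0[OF tendsto_const] filterlim_at_top_imp_at_infinity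
        filterlim_real_sequentially)
  then have "(\<lambda>N. f (real_of_int i / real N) - f 0) \<longlonglongrightarrow> f 0 - f 0"
    by (intro tendsto_diff isCont_tendsto_compose[OF assms] tendsto_const)
  then show ?thesis
    by (cases "i \<in> {-R..R} - {0}") (auto simp: Phi_minus_Psi)
qed

theorem proposition5p14:
  fixes \<gamma> :: real and R :: int and f :: "real \<Rightarrow> real"
  assumes "\<gamma> > 0" and "R \<ge> 1" and "f \<in> Cc_inf"
  shows "strongly_converges \<gamma> (\<lambda>N. Psi R N f) f"
proof (rule strongly_converges_if_sip_norm_tendsto_zero)
  show "f \<in> core_C"
    using assms(3) Cc_inf_subset_core_C by blast
  show "(\<lambda>N. sip_norm \<gamma> N (\<lambda>i. Phi N f i - Psi R N f i)) \<longlonglongrightarrow> 0"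
  proof (rule sip_norm_tendsto_zero_finite_support)
    show "finite ({-R..R} - {0})" by simp
    show "(\<lambda>N. Phi N f i - Psi R N f i) \<longlonglongrightarrow> 0" for i
      using Cc_inf_isCont[OF assms(3)] by (rule Phi_minus_Psi_tendsto_zero)
  qed (auto simp: Phi_minus_Psi)
qed

end
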